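(* If exactly one agent $i$ cuts one or more links due to confirmation bias (so that $T^*$ differs from $T$ only in row $i$, with $T^*_{ij}=0<T_{ij}$ for at least one $j\neq i$), then agent $i$'s influence strictly increases: $s^*_i>s_i$.
   Context: Agents $N=\{1,\dots,n\}$ communicate through a network $T$, an $n\times n$ row-stochastic matrix with entries $T_{ij}\in[0,1]$, assumed strongly connected and aperiodic. Each agent has an initial belief $x_{i0}\in[0,1]$. Confirmation bias of strength $q\in[0,1]$ produces $T^*$: for $j\ne i$, if $|x_{i0}-x_{j0}|>1-q$ then $T^*_{ij}=0$ and $T_{ij}$ is added to the self-link $T^*_{ii}$; otherwise $T^*_{ij}=T_{ij}$. $T^*$ is assumed strongly connected. The influence vector $s$ of a network $P$ is the left eigenvector for eigenvalue $1$ normalized to sum to $1$ ($s=sP$); $s,s^*$ are the influence vectors of $T,T^*$. *)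

theory Defs
  imports Complex_Main
begin

definition row_stochastic :: "('n::finite \<Rightarrow> 'n \<Rightarrow> real) \<Rightarrow> bool" where
  "row_stochastic P \<longleftrightarrow> (\<forall>i j. 0 \<le> P i j \<and> P i j \<le> 1) \<and> (\<forall>i. (\<Sum>j\<in>UNIV. P i j) = 1)"

definition link_rel :: "('n \<Rightarrow> 'n \<Rightarrow> real) \<Rightarrow> ('n \<times> 'n) set" where
  "link_rel P = {(i, j). P i j > 0}"

definition strongly_connected :: "('n \<Rightarrow> 'n \<Rightarrow> real) \<Rightarrow> bool" where
  "strongly_connected P \<longleftrightarrow> (\<forall>i j. (i, j) \<in> (link_rel P)\<^sup>+)"

definition aperiodic :: "('n \<Rightarrow> 'n \<Rightarrow> real) \<Rightarrow> bool" where
  "aperiodic P \<longleftrightarrow> (\<forall>i. Gcd {k::nat. 0 < k \<and> (i, i) \<in> (link_rel P) ^^ k} = 1)"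

definition cut :: "('n \<Rightarrow> real) \<Rightarrow> real \<Rightarrow> 'n \<Rightarrow> 'n \<Rightarrow> bool" where
  "cut x0 q i j \<longleftrightarrow> j \<noteq> i \<and> \<bar>x0 i - x0 j\<bar> > 1 - q"

definition conf_bias :: "('n::finite \<Rightarrow> 'n \<Rightarrow> real) \<Rightarrow> ('n \<Rightarrow> real) \<Rightarrow> real \<Rightarrow> 'n \<Rightarrow> 'n \<Rightarrow> real" where
  "conf_bias T x0 q i j =
     (if j = i then T i i + (\<Sum>k\<in>{k. cut x0 q i k}. T i k)
      else if cut x0 q i j then 0 else T i j)"

definition influence_vector :: "('n::finite \<Rightarrow> 'n \<Rightarrow> real) \<Rightarrow> ('n \<Rightarrow> real) \<Rightarrow> bool" where
  "influence_vector P s \<longleftrightarrow> (\<forall>j. (\<Sum>k\<in>UNIV. s k * P k j) = s j) \<and> (\<Sum>k\<in>UNIV. s k) = 1"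

end

theory Submission
  imports Defs "HOL-Analysis.Analysis"
begin

text \<open>Let h be the vector of mean hitting times of agent i for the random walk driven by T:
h_i = 0 and h_j = 1 + \<Sum>_k T_jk h_k for j \<noteq> i. Pairing the stationarity equations of an influence
vector with h gives Kac's formula s_i (1 + \<Sum>_j T_ij h_j) = 1, i.e. the influence of i is the
inverse of its mean return time. Since T* agrees with T outside row i, the same h satisfies
s*_i (1 + \<Sum>_j T*_ij h_j) = 1. Cutting the link to j moves its weight onto the self-link, where h
vanishes, while h_j \<ge> 1; so the return time strictly drops and s*_i > s_i.\<close>

definition harmonic_off :: "('n::finite \<Rightarrow> 'n \<Rightarrow> real) \<Rightarrow> 'n \<Rightarrow> ('n \<Rightarrow> real) \<Rightarrow> bool" where
  "harmonic_off P i x \<longleftrightarrow> (\<forall>j. j \<noteq> i \<longrightarrow> x j = (\<Sum>k\<in>UNIV. P j k * x k))"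

definition is_hitting_time :: "('n::finite \<Rightarrow> 'n \<Rightarrow> real) \<Rightarrow> 'n \<Rightarrow> ('n \<Rightarrow> real) \<Rightarrow> bool" where
  "is_hitting_time P i h \<longleftrightarrow> h i = 0 \<and> (\<forall>j. j \<noteq> i \<longrightarrow> h j = 1 + (\<Sum>k\<in>UNIV. P j k * h k))"

lemma row_stochastic_nonneg: "row_stochastic P \<Longrightarrow> 0 \<le> P j k"
  by (simp add: row_stochastic_def)

lemma row_stochastic_avg_ge:
  fixes P :: "'n::finite \<Rightarrow> 'n \<Rightarrow> real"
  assumes "row_stochastic P" "\<forall>k. m \<le> x k"
  shows "m \<le> (\<Sum>k\<in>UNIV. P j k * x k)"
proof -
  have "m = (\<Sum>k\<in>UNIV. P j k * m)"
    using assms(1) by (simp add: row_stochastic_def flip: sum_distrib_right)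
  also have "\<dots> \<le> (\<Sum>k\<in>UNIV. P j k * x k)"
    using assms by (intro sum_mono mult_left_mono) (auto simp: row_stochastic_nonneg)
  finally show ?thesis .
qed

lemma row_stochastic_avg_eq_max:
  fixes P :: "'n::finite \<Rightarrow> 'n \<Rightarrow> real"
  assumes "row_stochastic P" "\<forall>k. x k \<le> M" "(\<Sum>k\<in>UNIV. P j k * x k) = M" "P j k > 0"
  shows "x k = M"
proof -
  have "(\<Sum>k\<in>UNIV. P j k * (M - x k)) = (\<Sum>k\<in>UNIV. P j k) * M - (\<Sum>k\<in>UNIV. P j k * x k)"
    by (simp add: right_diff_distrib sum_subtractf sum_distrib_right)
  also have "\<dots> = 0"
    using assms(1,3) by (simp add: row_stochastic_def)
  finally have "P j k * (M - x k) = 0"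
    using assms(1,2) by (subst (asm) sum_nonneg_eq_0_iff) (auto simp: row_stochastic_nonneg)
  then show ?thesis
    using assms(4) by simp
qed

lemma harmonic_off_le_target:
  fixes P :: "'n::finite \<Rightarrow> 'n \<Rightarrow> real"
  assumes rs: "row_stochastic P" and sc: "strongly_connected P" and harm: "harmonic_off P i x"
  shows "x j \<le> x i"
proof (rule ccontr)
  assume "\<not> x j \<le> x i"
  define M where "M = Max (range x)"
  have le_M: "\<forall>k. x k \<le> M"
    by (simp add: M_def)
  have "M \<in> range x"
    unfolding M_def by (rule Max_in) auto
  then obtain j0 where j0: "x j0 = M"
    by auto
  have "x i < M"
    using le_M \<open>\<not> x j \<le> x i\<close> by (meson le_less_trans not_le)
  have max_spreads: "x v = M" if "(u, v) \<in> link_rel P" "x u = M" for u v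
  proof (rule row_stochastic_avg_eq_max[OF rs le_M])
    show "(\<Sum>k\<in>UNIV. P u k * x k) = M"
      using harm that(2) \<open>x i < M\<close> by (metis harmonic_off_def less_irrefl)
    show "P u v > 0"
      using that(1) by (simp add: link_rel_def)
  qed
  have "x k = M" if "(j0, k) \<in> (link_rel P)\<^sup>+" for k
    using that by (induction rule: trancl_induct) (use j0 max_spreads in auto)
  then have "x i = M"
    using sc by (simp add: strongly_connected_def)
  then show False
    using \<open>x i < M\<close> by simp
qed

lemma harmonic_off_eq_0:
  fixes P :: "'n::finite \<Rightarrow> 'n \<Rightarrow> real"
  assumes "row_stochastic P" "strongly_connected P" "harmonic_off P i x" "x i = 0"
  shows "x j = 0"
proof -
  have "harmonic_off P i (\<lambda>k. - x k)"
    using assms(3) by (simp add: harmonic_off_def sum_negf)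
  then have "- x j \<le> - x i"
    by (rule harmonic_off_le_target[OF assms(1,2)])
  moreover have "x j \<le> x i"
    by (rule harmonic_off_le_target[OF assms(1-3)])
  ultimately show ?thesis
    using assms(4) by simp
qed

text \<open>The hitting-time equations form a linear system whose homogeneous version only has the
trivial solution by the maximum principle above; hence it is solvable.\<close>

lemma hitting_time_exists:
  fixes P :: "'n::finite \<Rightarrow> 'n \<Rightarrow> real"
  assumes rs: "row_stochastic P" and sc: "strongly_connected P"
  obtains h where "is_hitting_time P i h"
proof -
  define L :: "real^'n \<Rightarrow> real^'n" where
    "L x = (\<chi> j. if j = i then x $ i else x $ j - (\<Sum>k\<in>UNIV. P j k * x $ k))" for x
  have "linear L"
    by (rule linearI)
      (auto simp: L_def vec_eq_iff algebra_simps sum.distrib sum_distrib_left)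
  moreover have "inj L"
  proof (subst linear_injective_0[OF \<open>linear L\<close>], intro allI impI)
    fix x assume "L x = 0"
    then have "x $ i = 0" "harmonic_off P i (\<lambda>k. x $ k)"
      by (auto simp: L_def vec_eq_iff harmonic_off_def split: if_splits)
    then show "x = 0"
      using harmonic_off_eq_0[OF rs sc] by (simp add: vec_eq_iff)
  qed
  ultimately have "surj L"
    by (rule linear_injective_imp_surjective) simp
  then obtain x where "L x = (\<chi> j. if j = i then 0 else 1)"
    by (metis surjE)
  then have "is_hitting_time P i (\<lambda>k. x $ k)"
    by (auto simp: L_def vec_eq_iff is_hitting_time_def split: if_splits)
  then show ?thesis
    by (rule that)
qed

lemma hitting_time_nonneg:
  fixes P :: "'n::finite \<Rightarrow> 'n \<Rightarrow> real"
  assumes rs: "row_stochastic P" and hit: "is_hitting_time P i h"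
  shows "0 \<le> h j"
proof -
  define m where "m = Min (range h)"
  have ge_m: "\<forall>k. m \<le> h k"
    by (simp add: m_def)
  have "m \<in> range h"
    unfolding m_def by (rule Min_in) auto
  then obtain j0 where j0: "h j0 = m"
    by auto
  have "0 \<le> m"
  proof (cases "j0 = i")
    case True
    then show ?thesis
      using hit j0 by (simp add: is_hitting_time_def)
  next
    case False
    then have "h j0 = 1 + (\<Sum>k\<in>UNIV. P j0 k * h k)"
      using hit by (simp add: is_hitting_time_def)
    then show ?thesis
      using row_stochastic_avg_ge[OF rs ge_m, of j0] j0 by linarith
  qed
  then show ?thesis
    using ge_m order_trans by blast
qed

lemma hitting_time_ge_1:
  fixes P :: "'n::finite \<Rightarrow> 'n \<Rightarrow> real"
  assumes rs: "row_stochastic P" and hit: "is_hitting_time P i h" and "j \<noteq> i"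
  shows "1 \<le> h j"
proof -
  have "0 \<le> (\<Sum>k\<in>UNIV. P j k * h k)"
    using hitting_time_nonneg[OF rs hit] by (intro row_stochastic_avg_ge[OF rs]) auto
  then show ?thesis
    using hit \<open>j \<noteq> i\<close> by (simp add: is_hitting_time_def)
qed

text \<open>Kac's formula. Only the rows of P other than i enter the hitting times, so P may differ
from T in row i.\<close>

lemma influence_times_return_time:
  fixes P T :: "'n::finite \<Rightarrow> 'n \<Rightarrow> real"
  assumes rows: "\<forall>k j. k \<noteq> i \<longrightarrow> P k j = T k j"
    and iv: "influence_vector P s" and hit: "is_hitting_time T i h"
  shows "s i * (1 + (\<Sum>j\<in>UNIV. P i j * h j)) = 1"
proof -
  define g where "g k = (\<Sum>j\<in>UNIV. P k j * h j)" for k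
  have stationary: "(\<Sum>k\<in>UNIV. s k * P k j) = s j" for j
    using iv by (simp add: influence_vector_def)
  have "(\<Sum>k\<in>UNIV. s k * g k) = (\<Sum>j\<in>UNIV. \<Sum>k\<in>UNIV. s k * P k j * h j)"
    by (subst sum.swap) (simp add: g_def sum_distrib_left mult.assoc)
  also have "\<dots> = (\<Sum>j\<in>UNIV. s j * h j)"
    by (simp add: stationary flip: sum_distrib_right)
  finally have sg: "(\<Sum>k\<in>UNIV. s k * g k) = (\<Sum>k\<in>UNIV. s k * h k)" .
  have "(\<Sum>k\<in>UNIV. s k * (h k - 1 - g k))
      = (\<Sum>k\<in>UNIV. s k * h k) - (\<Sum>k\<in>UNIV. s k) - (\<Sum>k\<in>UNIV. s k * g k)"
    by (simp add: algebra_simps sum_subtractf sum.distrib)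
  also have "\<dots> = - 1"
    using sg iv by (simp add: influence_vector_def)
  finally have "- 1 = (\<Sum>k\<in>UNIV. s k * (h k - 1 - g k))" ..
  also have "\<dots> = (\<Sum>k\<in>UNIV. if k = i then - (s i * (1 + g i)) else 0)"
    using hit rows by (intro sum.cong) (auto simp: g_def is_hitting_time_def algebra_simps)
  also have "\<dots> = - (s i * (1 + g i))"
    by simp
  finally show ?thesis
    by (simp add: g_def)
qed

lemma return_sum_strict_mono:
  fixes P T :: "'n::finite \<Rightarrow> 'n \<Rightarrow> real"
  assumes rs: "row_stochastic T" and hit: "is_hitting_time T i h"
    and le: "\<forall>j. j \<noteq> i \<longrightarrow> P i j \<le> T i j" and "j0 \<noteq> i" "P i j0 < T i j0"
  shows "(\<Sum>j\<in>UNIV. P i j * h j) < (\<Sum>j\<in>UNIV. T i j * h j)"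
proof (rule sum_strict_mono_ex1)
  have "h i = 0"
    using hit by (simp add: is_hitting_time_def)
  then show "\<forall>j\<in>UNIV. P i j * h j \<le> T i j * h j"
    using le hitting_time_nonneg[OF rs hit] by (metis mult_right_mono mult_zero_right)
  have "0 < h j0"
    using hitting_time_ge_1[OF rs hit \<open>j0 \<noteq> i\<close>] by simp
  then show "\<exists>j\<in>UNIV. P i j * h j < T i j * h j"
    using \<open>P i j0 < T i j0\<close> by (intro bexI[of _ j0] mult_strict_right_mono) auto
qed simp

lemma conf_bias_off_diag:
  "j \<noteq> i \<Longrightarrow> conf_bias T x0 q i j = (if cut x0 q i j then 0 else T i j)"
  by (simp add: conf_bias_def)

theorem mainTheorem3:
  fixes T :: "'n::finite \<Rightarrow> 'n \<Rightarrow> real"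
    and x0 :: "'n \<Rightarrow> real" and q :: real and i :: 'n
    and s s' :: "'n \<Rightarrow> real"
  assumes "row_stochastic T" "strongly_connected T" "aperiodic T"
    and "\<forall>k. 0 \<le> x0 k \<and> x0 k \<le> 1"
    and "0 \<le> q" "q \<le> 1"
    and "strongly_connected (conf_bias T x0 q)"
    and "\<forall>k j. k \<noteq> i \<longrightarrow> conf_bias T x0 q k j = T k j"
    and "\<exists>j. j \<noteq> i \<and> conf_bias T x0 q i j = 0 \<and> 0 < T i j"
    and "influence_vector T s"
    and "influence_vector (conf_bias T x0 q) s'"
  shows "s' i > s i"
proof -
  note rs = assms(1)
  define P where "P = conf_bias T x0 q"
  obtain h where hit: "is_hitting_time T i h"
    using hitting_time_exists[OF rs assms(2)] .
  define a a' where "a = (\<Sum>j\<in>UNIV. T i j * h j)" and "a' = (\<Sum>j\<in>UNIV. P i j * h j)"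
  have kac: "s i * (1 + a) = 1"
    unfolding a_def using assms(10) hit by (intro influence_times_return_time) auto
  have kac': "s' i * (1 + a') = 1"
    unfolding a'_def P_def using assms(8,11) hit by (rule influence_times_return_time)
  have P_le: "\<forall>j. j \<noteq> i \<longrightarrow> 0 \<le> P i j \<and> P i j \<le> T i j"
    using row_stochastic_nonneg[OF rs] by (simp add: P_def conf_bias_off_diag)
  have a'_nonneg: "0 \<le> a'"
    unfolding a'_def using P_le hit hitting_time_nonneg[OF rs hit]
    by (intro sum_nonneg) (metis is_hitting_time_def mult_eq_0_iff mult_nonneg_nonneg order_refl)
  have "a' < a"
    unfolding a_def a'_def using assms(9) P_le
    by (auto simp: P_def intro: return_sum_strict_mono[OF rs hit])
  moreover have "s i = 1 / (1 + a)" "s' i = 1 / (1 + a')"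
    using kac kac' a'_nonneg \<open>a' < a\<close> by (simp_all add: eq_divide_eq)
  ultimately show ?thesis
    using a'_nonneg by (simp add: frac_less2)
qed

end
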